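(* Let $G$ be a finite group and let $H_1, \ldots, H_{\ell}$ be proper subgroups of $G$. Suppose that $x_1, \ldots, x_m \in G$ represent distinct $G$-conjugacy classes, and that there are numbers $A_1,\dots,A_\ell$ and $B>0$ with $\sum_{i=1}^m|x_i^G \cap H_j| \leqslant A_j$ for all $j$ and $|x_i^G| \geqslant B$ for all $i$. Then for every positive integer $c$, \[ \sum_{i=1}^{m}|x_i^G|\left(\sum_{j=1}^{\ell}{\rm fpr}(x_i,G/H_j)\right)^c \leqslant B^{1-c}\left(\sum_{j=1}^{\ell}A_j\right)^c. \]
   Context: For $x\in G$ and $H<G$, ${\rm fpr}(x,G/H)=|x^G\cap H|/|x^G|$. *)

theory Defs
  imports "HOL-Algebra.Group" Complex_Main
begin

definition conj_class :: "('a, 'b) monoid_scheme \<Rightarrow> 'a \<Rightarrow> 'a set" where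
  "conj_class G x = {g \<otimes>\<^bsub>G\<^esub> x \<otimes>\<^bsub>G\<^esub> inv\<^bsub>G\<^esub> g | g. g \<in> carrier G}"

definition fpr :: "('a, 'b) monoid_scheme \<Rightarrow> 'a \<Rightarrow> 'a set \<Rightarrow> real" where
  "fpr G x H = real (card (conj_class G x \<inter> H)) / real (card (conj_class G x))"

end

theory Submission
  imports Defs
begin

text \<open>
  The inequality is pure arithmetic.
  With \<open>n\<^sub>i = |x\<^sub>i\<^sup>G|\<close> and \<open>a\<^sub>i = \<Sum>\<^sub>j |x\<^sub>i\<^sup>G \<inter> H\<^sub>j|\<close>, the \<open>i\<close>-th summand
  is \<open>n\<^sub>i (a\<^sub>i / n\<^sub>i)^c = a\<^sub>i^c / n\<^sub>i^(c-1) \<le> B^(1-c) a\<^sub>i^c\<close>, and superadditivity of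
  \<open>t \<mapsto> t^c\<close> on nonnegative numbers gives
  \<open>\<Sum>\<^sub>i a\<^sub>i^c \<le> (\<Sum>\<^sub>i a\<^sub>i)^c = (\<Sum>\<^sub>j \<Sum>\<^sub>i |x\<^sub>i\<^sup>G \<inter> H\<^sub>j|)^c \<le> (\<Sum>\<^sub>j A\<^sub>j)^c\<close>.
\<close>

lemma power_add_le_power_add:
  fixes s t :: "'a :: linordered_semidom"
  assumes "0 \<le> s" "0 \<le> t" "0 < c"
  shows "s ^ c + t ^ c \<le> (s + t) ^ c"
proof -
  obtain d where c: "c = Suc d" using \<open>0 < c\<close> gr0_implies_Suc by blast
  have "s ^ c + t ^ c = s ^ d * s + t ^ d * t" by (simp add: c mult.commute)
  also have "\<dots> \<le> (s + t) ^ d * s + (s + t) ^ d * t"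
    using assms by (intro add_mono mult_right_mono power_mono) auto
  also have "\<dots> = (s + t) ^ c" by (simp add: c algebra_simps)
  finally show ?thesis .
qed

lemma sum_power_le_power_sum:
  fixes f :: "'b \<Rightarrow> 'a :: linordered_semidom"
  assumes "\<And>i. i \<in> S \<Longrightarrow> 0 \<le> f i" "0 < c"
  shows "(\<Sum>i\<in>S. f i ^ c) \<le> (\<Sum>i\<in>S. f i) ^ c"
  using assms(1)
proof (induction S rule: infinite_finite_induct)
  case (insert a F)
  have "(\<Sum>i\<in>insert a F. f i ^ c) \<le> f a ^ c + (\<Sum>i\<in>F. f i) ^ c"
    using insert by simp
  also have "\<dots> \<le> (f a + (\<Sum>i\<in>F. f i)) ^ c"
    using insert \<open>0 < c\<close> by (intro power_add_le_power_add sum_nonneg) auto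
  finally show ?case using insert by simp
qed (use \<open>0 < c\<close> in simp_all)

lemma mult_power_divide_le:
  fixes a n B :: real
  assumes "0 < B" "B \<le> n" "0 \<le> a" "0 < c"
  shows "n * (a / n) ^ c \<le> B powr (1 - real c) * a ^ c"
proof -
  obtain d where c: "c = Suc d" using \<open>0 < c\<close> gr0_implies_Suc by blast
  have "n * (a / n) ^ c = a ^ c / n ^ d"
    using assms by (simp add: c power_divide field_simps)
  also have "\<dots> \<le> a ^ c / B ^ d"
    using assms by (intro divide_left_mono power_mono mult_pos_pos zero_less_power) auto
  also have "\<dots> = B powr (1 - real c) * a ^ c"
    using \<open>0 < B\<close> by (simp add: c powr_minus_divide powr_realpow)
  finally show ?thesis .
qed

lemma sum_fpr:
  "(\<Sum>j\<in>J. fpr G x (H j)) = (\<Sum>j\<in>J. real (card (conj_class G x \<inter> H j))) / real (card (conj_class G x))"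
  by (simp add: fpr_def sum_divide_distrib)

theorem lemma2p7:
  fixes G :: "('a, 'b) monoid_scheme"
    and H :: "nat \<Rightarrow> 'a set" and x :: "nat \<Rightarrow> 'a"
    and A :: "nat \<Rightarrow> real" and B :: real and l m c :: nat
  assumes "group G" and "finite (carrier G)"
    and "\<And>j. j \<in> {1..l} \<Longrightarrow> subgroup (H j) G \<and> H j \<noteq> carrier G"
    and "\<And>i. i \<in> {1..m} \<Longrightarrow> x i \<in> carrier G"
    and "\<And>i k. i \<in> {1..m} \<Longrightarrow> k \<in> {1..m} \<Longrightarrow> i \<noteq> k \<Longrightarrow> conj_class G (x i) \<noteq> conj_class G (x k)"
    and "B > 0"
    and "\<And>j. j \<in> {1..l} \<Longrightarrow> (\<Sum>i=1..m. real (card (conj_class G (x i) \<inter> H j))) \<le> A j"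
    and "\<And>i. i \<in> {1..m} \<Longrightarrow> real (card (conj_class G (x i))) \<ge> B"
    and "c > 0"
  shows "(\<Sum>i=1..m. real (card (conj_class G (x i))) * (\<Sum>j=1..l. fpr G (x i) (H j)) ^ c)
         \<le> B powr (1 - real c) * (\<Sum>j=1..l. A j) ^ c"
proof -
  define a where "a i = (\<Sum>j=1..l. real (card (conj_class G (x i) \<inter> H j)))" for i
  have a_nonneg: "0 \<le> a i" for i unfolding a_def by (simp add: sum_nonneg)
  have "(\<Sum>i=1..m. real (card (conj_class G (x i))) * (\<Sum>j=1..l. fpr G (x i) (H j)) ^ c)
      \<le> (\<Sum>i=1..m. B powr (1 - real c) * a i ^ c)"
    unfolding sum_fpr a_def[symmetric]
    using assms(6,8,9) a_nonneg by (intro sum_mono mult_power_divide_le) auto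
  also have "\<dots> \<le> B powr (1 - real c) * (\<Sum>i=1..m. a i) ^ c"
    using a_nonneg assms(9) by (simp add: sum_distrib_left[symmetric] mult_left_mono sum_power_le_power_sum)
  also have "\<dots> \<le> B powr (1 - real c) * (\<Sum>j=1..l. A j) ^ c"
  proof -
    have "(\<Sum>i=1..m. a i) = (\<Sum>j=1..l. \<Sum>i=1..m. real (card (conj_class G (x i) \<inter> H j)))"
      unfolding a_def by (rule sum.swap)
    also have "\<dots> \<le> (\<Sum>j=1..l. A j)"
      using assms(7) by (rule sum_mono)
    finally show ?thesis
      by (simp add: mult_left_mono power_mono sum_nonneg a_nonneg)
  qed
  finally show ?thesis .
qed

end
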